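(* Let $G$ be a connected graph with minimum degree $\delta\geq 2$ such that $|d_i-d_j|\leq (2\delta-1)^{2}$ for every edge $v_iv_j\in E(G)$. Then $GA(G)>ABC(G)$.
   Context: All graphs are finite, simple and undirected; $d_i$ denotes the degree of vertex $v_i$. The first geometric-arithmetic index is $GA(G)=\sum_{v_iv_j\in E(G)}\frac{2\sqrt{d_id_j}}{d_i+d_j}$ and the atom-bond connectivity index is $ABC(G)=\sum_{v_iv_j\in E(G)}\sqrt{\frac{d_i+d_j-2}{d_id_j}}$. *)

theory Defs
  imports Complex_Main
begin

definition simple_graph :: "'a set \<Rightarrow> 'a set set \<Rightarrow> bool" where
  "simple_graph V E \<longleftrightarrow> finite V \<and> (\<forall>e\<in>E. e \<subseteq> V \<and> card e = 2)"

definition degree :: "'a set set \<Rightarrow> 'a \<Rightarrow> nat" where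
  "degree E v = card {e\<in>E. v \<in> e}"

definition adj :: "'a set set \<Rightarrow> 'a \<Rightarrow> 'a \<Rightarrow> bool" where
  "adj E u v \<longleftrightarrow> {u, v} \<in> E"

definition connected_graph :: "'a set \<Rightarrow> 'a set set \<Rightarrow> bool" where
  "connected_graph V E \<longleftrightarrow> V \<noteq> {} \<and>
     (\<forall>u\<in>V. \<forall>v\<in>V. (u, v) \<in> {(x, y). adj E x y}\<^sup>*)"

definition min_degree :: "'a set \<Rightarrow> 'a set set \<Rightarrow> nat" where
  "min_degree V E = Min (degree E ` V)"

text \<open>Each edge e = {u,v} contributes f(d_u, d_v) for a symmetric f; we write the
  summand using the two endpoints of e.\<close>
definition GA :: "'a set \<Rightarrow> 'a set set \<Rightarrow> real" where
  "GA V E = (\<Sum>e\<in>E. THE r. \<exists>u v. e = {u, v} \<and> u \<noteq> v \<and>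
      r = 2 * sqrt (real (degree E u) * real (degree E v)) / (real (degree E u) + real (degree E v)))"

definition ABC :: "'a set \<Rightarrow> 'a set set \<Rightarrow> real" where
  "ABC V E = (\<Sum>e\<in>E. THE r. \<exists>u v. e = {u, v} \<and> u \<noteq> v \<and>
      r = sqrt ((real (degree E u) + real (degree E v) - 2) / (real (degree E u) * real (degree E v))))"

end

theory Submission imports Defs begin

text \<open>The theorem is proved edge by edge: for degrees \<open>x, y \<ge> 2\<close> the ABC summand is smaller
  than the GA summand iff \<open>(x + y)\<^sup>2 (x + y - 2) < 4 (x y)\<^sup>2\<close>. Writing \<open>y = x + t\<close> with
  \<open>0 \<le> t \<le> T = (2x - 1)\<^sup>2\<close>, the difference of the two sides is \<open>q t + t\<^sup>2 (T - t)\<close> for a concave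
  quadratic \<open>q\<close>, which is positive on \<open>[0, T]\<close> because it is positive at both end points.\<close>

lemma cubic_lt_quartic_of_degree_gap:
  fixes x y :: real
  assumes x: "2 \<le> x" and xy: "x \<le> y" and gap: "y - x \<le> (2*x - 1)^2"
  shows "(x + y)^2 * (x + y - 2) < 4 * (x*y)^2"
proof -
  define t where "t = y - x"
  define T where "T = (2*x - 1)^2"
  define q where "q = (\<lambda>t. -(2*x - 1)*t^2 + (8*x^3 - 12*x^2 + 8*x)*t + 4*x^4 - 8*x^3 + 8*x^2)"
  have t: "0 \<le> t" "t \<le> T" and T: "T > 0"
    using x xy gap unfolding t_def T_def by auto
  have diff: "4 * (x*y)^2 - (x + y)^2 * (x + y - 2) = q t + t^2 * (T - t)"
    unfolding q_def T_def t_def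
    by (simp add: algebra_simps power2_eq_square power3_eq_cube power4_eq_xxxx)
  have q0: "q 0 > 0"
  proof -
    have "q 0 = 4*x^2 * ((x - 1)^2 + 1)"
      unfolding q_def by (simp add: algebra_simps power2_eq_square power3_eq_cube power4_eq_xxxx)
    thus ?thesis using x by (simp add: add_pos_nonneg)
  qed
  have qT: "q T > 0"
  proof -
    have "q T = 4*x^4 + 4*(x*x) - 2*x + 1"
      unfolding q_def T_def by (simp add: algebra_simps power2_eq_square power3_eq_cube power4_eq_xxxx)
    moreover have "4*(x*x) \<ge> 8*x" using x by (simp add: mult_right_mono)
    moreover have "x^4 \<ge> 0" by simp
    ultimately show ?thesis using x by linarith
  qed
  \<comment> \<open>Lagrange interpolation of \<open>q\<close> at \<open>0\<close> and \<open>T\<close>; the remainder is nonnegative by concavity.\<close>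
  have interpolation: "T * q t = (2*x - 1)*t*(T - t)*T + (T - t)*q 0 + t*q T"
    unfolding q_def T_def by (simp add: algebra_simps power2_eq_square power3_eq_cube power4_eq_xxxx)
  have "(T - t)*q 0 + t*q T > 0"
    using t T q0 qT by (cases "t = 0") (auto intro: add_nonneg_pos)
  moreover have "(2*x - 1)*t*(T - t)*T \<ge> 0" using x t T by simp
  ultimately have "T * q t > 0" using interpolation by linarith
  hence "q t > 0" using T by (simp add: zero_less_mult_iff)
  moreover have "t^2 * (T - t) \<ge> 0" using t by simp
  ultimately show ?thesis using diff by linarith
qed

lemma abc_term_lt_ga_term:
  fixes x y :: real
  assumes x: "2 \<le> x" and y: "2 \<le> y" and gap: "\<bar>x - y\<bar> \<le> (2 * min x y - 1)^2"
  shows "sqrt ((x + y - 2) / (x*y)) < 2 * sqrt (x*y) / (x + y)"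
proof -
  have key: "(x + y)^2 * (x + y - 2) < 4 * (x*y)^2"
  proof (cases "x \<le> y")
    case True
    thus ?thesis using cubic_lt_quartic_of_degree_gap[OF x True] gap by simp
  next
    case False
    hence "(y + x)^2 * (y + x - 2) < 4 * (y*x)^2"
      using cubic_lt_quartic_of_degree_gap[OF y] gap by simp
    thus ?thesis by (simp add: algebra_simps)
  qed
  have pos: "x > 0" "y > 0" using x y by auto
  have "(x + y - 2) / (x*y) = (x + y)^2 * (x + y - 2) / ((x*y) * (x + y)^2)" using pos by simp
  also have "\<dots> < 4 * (x*y)^2 / ((x*y) * (x + y)^2)"
    using key pos by (intro divide_strict_right_mono) auto
  also have "\<dots> = 4*(x*y) / (x + y)^2" using pos by (simp add: power2_eq_square)
  finally have "sqrt ((x + y - 2) / (x*y)) < sqrt (4*(x*y) / (x + y)^2)"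
    by (rule real_sqrt_less_mono)
  also have "\<dots> = 2 * sqrt (x*y) / (x + y)"
    using pos by (simp add: real_sqrt_divide real_sqrt_mult)
  finally show ?thesis .
qed

lemma the_symmetric_edge_value:
  fixes g :: "'a \<Rightarrow> 'a \<Rightarrow> real"
  assumes sym: "\<And>u v. g u v = g v u" and "a \<noteq> b"
  shows "(THE r. \<exists>u v. {a, b} = {u, v} \<and> u \<noteq> v \<and> r = g u v) = g a b"
proof (rule the_equality)
  show "\<exists>u v. {a, b} = {u, v} \<and> u \<noteq> v \<and> g a b = g u v" using assms by blast
next
  fix r assume "\<exists>u v. {a, b} = {u, v} \<and> u \<noteq> v \<and> r = g u v"
  thus "r = g a b" using sym by (auto simp: doubleton_eq_iff)
qed

lemma simple_graph_finite_edges: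
  assumes "simple_graph V E"
  shows "finite E"
proof (rule finite_subset)
  show "E \<subseteq> Pow V" using assms unfolding simple_graph_def by auto
  show "finite (Pow V)" using assms unfolding simple_graph_def by simp
qed

lemma min_degree_le_degree:
  assumes "simple_graph V E" and "v \<in> V"
  shows "min_degree V E \<le> degree E v"
  using assms unfolding min_degree_def simple_graph_def by simp

lemma edges_nonempty_if_min_degree_pos:
  assumes "simple_graph V E" and "V \<noteq> {}" and "min_degree V E > 0"
  shows "E \<noteq> {}"
proof -
  obtain v where "v \<in> V" using assms(2) by auto
  hence "degree E v > 0" using min_degree_le_degree[OF assms(1)] assms(3) by (meson less_le_trans)
  thus ?thesis unfolding degree_def by auto
qed

lemma abc_edge_term_lt_ga_edge_term:
  assumes "a \<noteq> b" and x: "2 \<le> real (degree E a)" and y: "2 \<le> real (degree E b)"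
    and gap: "\<bar>real (degree E a) - real (degree E b)\<bar>
              \<le> (2 * min (real (degree E a)) (real (degree E b)) - 1)^2"
  shows "(THE r. \<exists>u v. {a, b} = {u, v} \<and> u \<noteq> v \<and>
            r = sqrt ((real (degree E u) + real (degree E v) - 2) / (real (degree E u) * real (degree E v))))
       < (THE r. \<exists>u v. {a, b} = {u, v} \<and> u \<noteq> v \<and>
            r = 2 * sqrt (real (degree E u) * real (degree E v)) / (real (degree E u) + real (degree E v)))"
  using abc_term_lt_ga_term[OF x y gap]
  by (subst (1 2) the_symmetric_edge_value) (simp_all add: algebra_simps \<open>a \<noteq> b\<close>)

theorem theorem3p5:
  fixes V :: "'a set" and E :: "'a set set"
  assumes "simple_graph V E"
    and "connected_graph V E"
    and "min_degree V E \<ge> 2"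
    and "\<forall>u v. {u, v} \<in> E \<longrightarrow>
           \<bar>real (degree E u) - real (degree E v)\<bar> \<le> (2 * real (min_degree V E) - 1) ^ 2"
  shows "GA V E > ABC V E"
  unfolding GA_def ABC_def
proof (rule sum_strict_mono)
  show "finite E" using simple_graph_finite_edges[OF assms(1)] .
  \<comment> \<open>Connectedness is only needed to make \<open>V\<close>, hence \<open>E\<close>, nonempty.\<close>
  show "E \<noteq> {}"
    using edges_nonempty_if_min_degree_pos[OF assms(1)] assms(2,3)
    unfolding connected_graph_def by simp
  fix e assume "e \<in> E"
  then obtain a b where e: "e = {a, b}" "a \<noteq> b" and ab: "a \<in> V" "b \<in> V"
    using assms(1) unfolding simple_graph_def by (metis card_2_iff insert_subset)
  let ?\<delta> = "real (min_degree V E)" and ?x = "real (degree E a)" and ?y = "real (degree E b)"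
  have "?\<delta> \<le> min ?x ?y"
    using min_degree_le_degree[OF assms(1)] ab by simp
  hence "(2 * ?\<delta> - 1)^2 \<le> (2 * min ?x ?y - 1)^2"
    using assms(3) by (intro power_mono) auto
  moreover have "\<bar>?x - ?y\<bar> \<le> (2 * ?\<delta> - 1)^2"
    using assms(4) \<open>e \<in> E\<close> e by blast
  moreover have "2 \<le> ?x" "2 \<le> ?y"
    using \<open>?\<delta> \<le> min ?x ?y\<close> assms(3) by auto
  ultimately show "(THE r. \<exists>u v. e = {u, v} \<and> u \<noteq> v \<and>
            r = sqrt ((real (degree E u) + real (degree E v) - 2) / (real (degree E u) * real (degree E v))))
       < (THE r. \<exists>u v. e = {u, v} \<and> u \<noteq> v \<and>
            r = 2 * sqrt (real (degree E u) * real (degree E v)) / (real (degree E u) + real (degree E v)))"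
    unfolding e using abc_edge_term_lt_ga_edge_term[OF \<open>a \<noteq> b\<close>] by (meson order.trans)
qed

end
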